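(* Consider the following model. A principal P and an agent A interact over two periods $t\in\{1,2\}$. States $\omega_t\in\{0,1\}$ satisfy $\Pr[\omega_1=1]=\mu_0\in(0,1)$ and $\Pr[\omega_2=\omega\mid\omega_1=\omega]=\rho\in(1/2,1)$. In each period A chooses $e_t\in\{0,1\}$; if $e_t=1$ he observes $\omega_t$, if $e_t=0$ he observes $\omega_t$ with probability $\pi\in(0,1)$ and nothing otherwise. A reports $r_t\in\{\varnothing,\omega_t\}$ if he observed $\omega_t$, else $r_t=\varnothing$. P chooses $x$ at the end of period 2. Payoffs: P gets $\mathbb{1}[x=\omega_2]-k(e_1+e_2)$, A gets $x-c(e_1+e_2)$, $c,k>0$. Let $\kappa=k/(1-\pi)$, $\gamma=c/(1-\pi)$, $\mu_2(\varnothing)=\rho\mu_0+(1-\rho)(1-\mu_0)$, and assume $\kappa\in(1-\rho,\min\{\mu_2(\varnothing),1-\mu_2(\varnothing)\}]$ and $\gamma\le1-\rho$. Consider the mechanism with $\sigma_1=0$, $\sigma_2(r_1)=\mathbb{1}[r_1=\varnothing]$, and $\hat x(r_1,1)=1$, $\hat x(r_1,0)=0$ for all $r_1$, $\hat x(1,\varnothing)=1$, $\hat x(0,\varnothing)=0$, $\hat x(\varnothing,\varnothing)=0$. Consider A's deviation strategy: test in period 1; report $r_1=1$ if $\omega_1=1$ and $r_1=\varnothing$ otherwise; if $\omega_1=1$, do not test in period 2 and report a freely observed $\omega_2$ if and only if $\omega_2=1$; if $\omega_1=0$, test again in period 2 and report the result. Then this deviation gives A a strictly higher expected payoff than his best strategy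 among those that do not test in period 1 if and only if $$\gamma<\bar\gamma':=\frac{\mu_0(1-\rho)}{1-\mu_0(1-\pi)}.$$
   Context: The mechanism described is the baseline (first-best, efficient-assignment) mechanism for this range of $\kappa$, modified so that no report after a requested test yields assignment $0$. A best-responds to the committed mechanism. *)

theory Defs
  imports Complex_Main
begin

text \<open>States \<omega>_t are booleans (True = 1, False = 0). A period-t signal/report is a
  bool option (None = nothing observed / empty report \<open>\<emptyset>\<close>).\<close>

text \<open>Pure strategy of A: (e_1, report rule in period 1 as a function of the period-1
  signal, period-2 effort as a function of the period-1 signal, period-2 report rule
  as a function of both signals).\<close>
type_synonym strategy =
  "bool \<times> (bool option \<Rightarrow> bool option) \<times> (bool option \<Rightarrow> bool) \<times>
   (bool option \<Rightarrow> bool option \<Rightarrow> bool option)"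

definition st_e1 :: "strategy \<Rightarrow> bool" where "st_e1 s = fst s"
definition st_r1 :: "strategy \<Rightarrow> bool option \<Rightarrow> bool option" where "st_r1 s = fst (snd s)"
definition st_e2 :: "strategy \<Rightarrow> bool option \<Rightarrow> bool" where "st_e2 s = fst (snd (snd s))"
definition st_r2 :: "strategy \<Rightarrow> bool option \<Rightarrow> bool option \<Rightarrow> bool option"
  where "st_r2 s = snd (snd (snd s))"

definition feasible_report :: "bool option \<Rightarrow> bool option \<Rightarrow> bool" where
  "feasible_report sg r \<longleftrightarrow> r = None \<or> r = sg"

definition feasible :: "strategy \<Rightarrow> bool" where
  "feasible s \<longleftrightarrow> (\<forall>sg. feasible_report sg (st_r1 s sg)) \<and>
                   (\<forall>sg1 sg2. feasible_report sg2 (st_r2 s sg1 sg2))"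

definition ind :: "bool \<Rightarrow> real" where "ind b = (if b then 1 else 0)"

definition prior :: "real \<Rightarrow> bool \<Rightarrow> real" where
  "prior mu0 w = (if w then mu0 else 1 - mu0)"

definition trans :: "real \<Rightarrow> bool \<Rightarrow> bool \<Rightarrow> real" where
  "trans rho w w' = (if w' = w then rho else 1 - rho)"

definition obsp :: "real \<Rightarrow> bool \<Rightarrow> bool \<Rightarrow> real" where
  "obsp pp e ob = (if e then (if ob then 1 else 0) else (if ob then pp else 1 - pp))"

definition signal :: "bool \<Rightarrow> bool \<Rightarrow> bool option" where
  "signal ob w = (if ob then Some w else None)"

definition xhat :: "bool option \<Rightarrow> bool option \<Rightarrow> real" where
  "xhat r1 r2 = (case r2 of Some b \<Rightarrow> ind b | None \<Rightarrow> ind (r1 = Some True))"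

definition payoffA :: "real \<Rightarrow> real \<Rightarrow> real \<Rightarrow> real \<Rightarrow> strategy \<Rightarrow> real" where
  "payoffA mu0 rho pp c s =
     (\<Sum>w1\<in>UNIV. \<Sum>w2\<in>UNIV. \<Sum>ob1\<in>UNIV. \<Sum>ob2\<in>UNIV.
        (let sg1 = signal ob1 w1; e2 = st_e2 s sg1; sg2 = signal ob2 w2 in
          prior mu0 w1 * trans rho w1 w2 * obsp pp (st_e1 s) ob1 * obsp pp e2 ob2 *
          (xhat (st_r1 s sg1) (st_r2 s sg1 sg2) - c * (ind (st_e1 s) + ind e2))))"

definition deviation :: strategy where
  "deviation = (True,
     (\<lambda>sg. if sg = Some True then Some True else None),
     (\<lambda>sg. sg = Some False),
     (\<lambda>sg1 sg2. if sg1 = Some True then (if sg2 = Some True then Some True else None)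
                else sg2))"

end

theory Submission imports Defs begin

text \<open>Without a period-1 test, a feasible report can never secure more than what A
  actually observed: \<open>x = 1\<close> if he saw \<open>\<omega>\<^sub>1 = 1\<close>, and otherwise \<open>x = 1\<close> only if he saw
  \<open>\<omega>\<^sub>2 = 1\<close>. Since \<open>\<gamma> \<le> 1 - \<rho>\<close> and every posterior of \<open>\<omega>\<^sub>2 = 1\<close> that matters is at least
  \<open>1 - \<rho>\<close>, a period-2 test is always worth its cost, so the best such strategy reports
  truthfully and tests in period 2 unless \<open>\<omega>\<^sub>1 = 1\<close> was seen. Comparing its payoff with
  that of the deviation leaves the sign of \<open>(1 - \<pi>) \<mu>\<^sub>0 (1 - \<rho>) - c (1 - \<mu>\<^sub>0 (1 - \<pi>))\<close>.\<close>

definition max_assignment :: "bool option \<Rightarrow> bool option \<Rightarrow> real" where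
  "max_assignment sg1 sg2 = (if sg1 = Some True then 1 else ind (sg2 = Some True))"

lemma xhat_le_max_assignment:
  assumes "feasible_report sg1 r1" "feasible_report sg2 r2"
  shows "xhat r1 r2 \<le> max_assignment sg1 sg2"
  using assms
  by (cases sg1; cases sg2) (auto simp: feasible_report_def xhat_def max_assignment_def ind_def)

definition max_report_payoff ::
    "real \<Rightarrow> real \<Rightarrow> real \<Rightarrow> real \<Rightarrow> (bool option \<Rightarrow> bool) \<Rightarrow> real" where
  "max_report_payoff mu0 rho pp c e2 =
     (\<Sum>w1\<in>UNIV. \<Sum>w2\<in>UNIV. \<Sum>ob1\<in>UNIV. \<Sum>ob2\<in>UNIV.
        (let sg1 = signal ob1 w1; sg2 = signal ob2 w2 in
          prior mu0 w1 * trans rho w1 w2 * obsp pp False ob1 * obsp pp (e2 sg1) ob2 *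
          (max_assignment sg1 sg2 - c * ind (e2 sg1))))"

lemma payoffA_le_max_report_payoff:
  assumes "feasible s" "\<not> st_e1 s"
    and "0 \<le> mu0" "mu0 \<le> 1" "0 \<le> rho" "rho \<le> 1" "0 \<le> pp" "pp \<le> 1"
  shows "payoffA mu0 rho pp c s \<le> max_report_payoff mu0 rho pp c (st_e2 s)"
proof -
  have "xhat (st_r1 s sg1) (st_r2 s sg1 sg2) \<le> max_assignment sg1 sg2" for sg1 sg2
    using assms(1) by (intro xhat_le_max_assignment) (auto simp: feasible_def)
  moreover have "0 \<le> prior mu0 w1 * trans rho w1 w2 * obsp pp False ob1 * obsp pp e ob2"
    for w1 w2 ob1 ob2 e
    using assms(3-) by (auto simp: prior_def trans_def obsp_def)
  moreover have e1: "st_e1 s = False"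
    using assms(2) by simp
  ultimately show ?thesis
    unfolding payoffA_def max_report_payoff_def Let_def e1
    by (intro sum_mono mult_left_mono) (auto simp: ind_def)
qed

lemma max_report_payoff_eq:
  "max_report_payoff mu0 rho pp c e2 =
     pp * mu0 * (1 - c * ind (e2 (Some True)))
   + pp * (1 - mu0) * ((1 - rho) * (if e2 (Some False) then 1 else pp) - c * ind (e2 (Some False)))
   + (1 - pp) * ((rho * mu0 + (1 - rho) * (1 - mu0)) * (if e2 None then 1 else pp)
                 - c * ind (e2 None))"
  by (cases "e2 (Some True)"; cases "e2 (Some False)"; cases "e2 None")
     (simp_all add: max_report_payoff_def max_assignment_def UNIV_bool prior_def trans_def
        obsp_def signal_def ind_def Let_def algebra_simps)

text \<open>\<open>q\<close> is the posterior probability of \<open>\<omega>\<^sub>2 = 1\<close>: a test raises the chance of seeing it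
  from \<open>\<pi>\<close> to \<open>1\<close> at cost \<open>c\<close>.\<close>

lemma period2_test_worthwhile:
  fixes q c pp rho :: real
  assumes "c \<le> (1 - rho) * (1 - pp)" "1 - rho \<le> q" "pp \<le> 1"
  shows "q * (if e then 1 else pp) - c * ind e \<le> q - c"
proof -
  have "(1 - rho) * (1 - pp) \<le> q * (1 - pp)"
    using assms(2,3) by (intro mult_right_mono) auto
  then show ?thesis
    using assms(1) by (cases e) (auto simp: ind_def algebra_simps)
qed

definition no_initial_test_value :: "real \<Rightarrow> real \<Rightarrow> real \<Rightarrow> real \<Rightarrow> real" where
  "no_initial_test_value mu0 rho pp c =
     pp * mu0 + pp * (1 - mu0) * ((1 - rho) - c)
   + (1 - pp) * ((rho * mu0 + (1 - rho) * (1 - mu0)) - c)"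

lemma max_report_payoff_le:
  assumes "c \<le> (1 - rho) * (1 - pp)" "1/2 \<le> rho"
    and "0 \<le> mu0" "mu0 \<le> 1" "0 \<le> pp" "pp \<le> 1" "0 \<le> c"
  shows "max_report_payoff mu0 rho pp c e2 \<le> no_initial_test_value mu0 rho pp c"
proof -
  have posterior_ge: "1 - rho \<le> rho * mu0 + (1 - rho) * (1 - mu0)"
  proof -
    have "rho * mu0 + (1 - rho) * (1 - mu0) - (1 - rho) = mu0 * (2 * rho - 1)"
      by (simp add: algebra_simps)
    moreover have "0 \<le> mu0 * (2 * rho - 1)"
      using assms(2,3) by simp
    ultimately show ?thesis by linarith
  qed
  note worthwhile = period2_test_worthwhile[OF assms(1) _ assms(6)]
  show ?thesis
    unfolding max_report_payoff_eq no_initial_test_value_def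
  proof (intro add_mono)
    show "pp * mu0 * (1 - c * ind (e2 (Some True))) \<le> pp * mu0"
      using assms(3,5,7) by (simp add: ind_def right_diff_distrib)
  qed (use assms(3-6) posterior_ge in \<open>intro mult_left_mono worthwhile; simp\<close>)+
qed

definition truthful_retest :: strategy where
  "truthful_retest = (False, (\<lambda>sg. sg), (\<lambda>sg. sg \<noteq> Some True),
     (\<lambda>sg1 sg2. if sg1 = Some True then (if sg2 = Some True then Some True else None) else sg2))"

lemma feasible_truthful_retest: "feasible truthful_retest" "\<not> st_e1 truthful_retest"
  by (auto simp: truthful_retest_def feasible_def feasible_report_def st_r1_def st_r2_def st_e1_def)

lemma payoffA_truthful_retest:
  "payoffA mu0 rho pp c truthful_retest = no_initial_test_value mu0 rho pp c"
  by (simp add: payoffA_def truthful_retest_def no_initial_test_value_def st_r1_def st_r2_def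
      st_e1_def st_e2_def xhat_def UNIV_bool prior_def trans_def obsp_def signal_def ind_def
      Let_def algebra_simps)

lemma Max_no_initial_test_payoffA:
  assumes "c \<le> (1 - rho) * (1 - pp)" "1/2 \<le> rho" "rho \<le> 1"
    and "0 \<le> mu0" "mu0 \<le> 1" "0 \<le> pp" "pp \<le> 1" "0 \<le> c"
  shows "Max (payoffA mu0 rho pp c ` {s. feasible s \<and> \<not> st_e1 s})
           = no_initial_test_value mu0 rho pp c"
proof (rule Max_eqI)
  show "finite (payoffA mu0 rho pp c ` {s. feasible s \<and> \<not> st_e1 s})"
    by simp
  show "no_initial_test_value mu0 rho pp c \<in> payoffA mu0 rho pp c ` {s. feasible s \<and> \<not> st_e1 s}"
    using feasible_truthful_retest payoffA_truthful_retest by (metis (mono_tags) image_eqI mem_Collect_eq)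
  fix v
  assume "v \<in> payoffA mu0 rho pp c ` {s. feasible s \<and> \<not> st_e1 s}"
  then obtain s where "feasible s" "\<not> st_e1 s" and v: "v = payoffA mu0 rho pp c s"
    by blast
  then have "v \<le> max_report_payoff mu0 rho pp c (st_e2 s)"
    using payoffA_le_max_report_payoff assms by auto
  also have "\<dots> \<le> no_initial_test_value mu0 rho pp c"
    using max_report_payoff_le assms by blast
  finally show "v \<le> no_initial_test_value mu0 rho pp c" .
qed

lemma payoffA_deviation:
  "payoffA mu0 rho pp c deviation = mu0 * (1 - c) + (1 - mu0) * ((1 - rho) - 2 * c)"
  by (simp add: payoffA_def deviation_def st_r1_def st_r2_def st_e1_def st_e2_def xhat_def
      UNIV_bool prior_def trans_def obsp_def signal_def ind_def Let_def algebra_simps)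

text \<open>The bounds on \<open>\<kappa> = k / (1 - \<pi>)\<close> only single out the mechanism; A's comparison does
  not involve \<open>k\<close>.\<close>

theorem propositionC4:
  fixes mu0 rho pp c k :: real
  assumes "0 < mu0" "mu0 < 1"
    and "1/2 < rho" "rho < 1"
    and "0 < pp" "pp < 1"
    and "0 < c" "0 < k"
    and "1 - rho < k / (1 - pp)"
    and "k / (1 - pp) \<le> min (rho * mu0 + (1 - rho) * (1 - mu0))
                              (1 - (rho * mu0 + (1 - rho) * (1 - mu0)))"
    and "c / (1 - pp) \<le> 1 - rho"
  shows "payoffA mu0 rho pp c deviation >
           Max (payoffA mu0 rho pp c ` {s. feasible s \<and> \<not> st_e1 s})
         \<longleftrightarrow> c / (1 - pp) < mu0 * (1 - rho) / (1 - mu0 * (1 - pp))"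
proof -
  have denom_pos: "0 < 1 - mu0 * (1 - pp)"
    using mult_strict_mono'[of mu0 1 "1 - pp" 1] assms(1,2,5,6) by simp
  have "c \<le> (1 - rho) * (1 - pp)"
    using assms(6,11) by (simp add: pos_divide_le_eq)
  then have "Max (payoffA mu0 rho pp c ` {s. feasible s \<and> \<not> st_e1 s})
               = no_initial_test_value mu0 rho pp c"
    using assms by (intro Max_no_initial_test_payoffA) auto
  moreover have "payoffA mu0 rho pp c deviation - no_initial_test_value mu0 rho pp c
                   = (1 - pp) * mu0 * (1 - rho) - c * (1 - mu0 * (1 - pp))"
    unfolding payoffA_deviation no_initial_test_value_def by (simp add: algebra_simps)
  moreover have "c / (1 - pp) < mu0 * (1 - rho) / (1 - mu0 * (1 - pp))
                   \<longleftrightarrow> c * (1 - mu0 * (1 - pp)) < (1 - pp) * mu0 * (1 - rho)"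
    using denom_pos assms(6) by (simp add: field_simps)
  ultimately show ?thesis
    by linarith
qed

end
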